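(* Let $k\ge1$, $\lambda>0$, $\beta\in[0,\infty]$ and $\mathcal{D}\in\{\mathcal{E},\mathcal{O}\}^k$. For any $\mathcal{D}$-polymer $\gamma=(A_1,\dots,A_k)$, \[ \omega(\gamma) \le \lambda^{\|\gamma\|} \tilde\alpha_k^{\|N(\gamma)\|}, \] where $\|\gamma\|:=\sum_i|A_i|$, $\|N(\gamma)\|:=\sum_i|N(A_i)|$, $\tilde\alpha_k:=\alpha_k^{1/k}$ and $\alpha_k := \frac{1 + ((1+\lambda)^k-1)e^{-\beta}}{(1+\lambda)^k}$.
   Context: $Q_d$ is the hypercube on $\{0,1\}^d$, $\mathcal{E},\mathcal{O}$ its even and odd vertices; $N(U)$ the neighborhood, $[U]:=\{v:N(v)\subset N(U)\}$ the closure; $E(A,B)$ the edges between $A$ and $B$. A polymer is a tuple $\gamma=(A_1,\dots,A_k)$ with each $A_i$ contained in $\mathcal{E}$ or in $\mathcal{O}$, $|[A_i]|\le\frac34 2^{d-1}$, and $H_\gamma$ connected (hence nonempty), where $H_\gamma$ has vertices $(i,u)$, $u\in A_i$, with $(i,u)\sim(j,v)$ iff ($i=j$ and $\mathrm{dist}(u,v)=2$) or ($i\ne j$ and $\mathrm{dist}(u,v)\in\{0,1\}$). A $\mathcal{D}$-polymer additionally has $A_i\subset\mathcal{D}_i$ for all $i$. Its weight is \[ \omega(\gamma):= \sum_{B_i \subset N(A_i)\,\forall i} \frac{\lambda^{\sum_i(|A_i|+|B_i|)}}{(1+\lambda)^{\sum_i|N(A_i)|}} e^{-\beta|E(A_1,B_1)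 \cup \cdots \cup E(A_k,B_k)|}. \] *)

theory Defs
  imports Complex_Main "HOL-Library.FuncSet" "HOL-Library.Extended_Real"
begin

text \<open>Vertices of the hypercube Q_d on {0,1}^d are encoded as subsets of {..<d}
  (the support of the 0/1 vector). Hamming distance is the size of the symmetric difference.\<close>

definition cube_V :: "nat \<Rightarrow> nat set set" where
  "cube_V d = Pow {..<d}"

definition hdist :: "nat set \<Rightarrow> nat set \<Rightarrow> nat" where
  "hdist u v = card ((u - v) \<union> (v - u))"

definition cube_adj :: "nat set \<Rightarrow> nat set \<Rightarrow> bool" where
  "cube_adj u v \<longleftrightarrow> hdist u v = 1"

definition Even_V :: "nat \<Rightarrow> nat set set" where
  "Even_V d = {v \<in> cube_V d. even (card v)}"

definition Odd_V :: "nat \<Rightarrow> nat set set" where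
  "Odd_V d = {v \<in> cube_V d. odd (card v)}"

definition nbhd :: "nat \<Rightarrow> nat set set \<Rightarrow> nat set set" where
  "nbhd d U = {v \<in> cube_V d. \<exists>u\<in>U. cube_adj u v}"

definition closure_cube :: "nat \<Rightarrow> nat set set \<Rightarrow> nat set set" where
  "closure_cube d U = {v \<in> cube_V d. nbhd d {v} \<subseteq> nbhd d U}"

definition edges_between :: "nat set set \<Rightarrow> nat set set \<Rightarrow> nat set set set" where
  "edges_between A B = {{u, v} | u v. u \<in> A \<and> v \<in> B \<and> cube_adj u v}"

definition H_verts :: "nat \<Rightarrow> (nat \<Rightarrow> nat set set) \<Rightarrow> (nat \<times> nat set) set" where
  "H_verts k A = {(i, u). i < k \<and> u \<in> A i}"

definition H_adj :: "(nat \<times> nat set) \<Rightarrow> (nat \<times> nat set) \<Rightarrow> bool" where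
  "H_adj x y \<longleftrightarrow> (fst x = fst y \<and> hdist (snd x) (snd y) = 2)
                 \<or> (fst x \<noteq> fst y \<and> hdist (snd x) (snd y) \<le> 1)"

definition H_connected :: "nat \<Rightarrow> (nat \<Rightarrow> nat set set) \<Rightarrow> bool" where
  "H_connected k A \<longleftrightarrow> H_verts k A \<noteq> {} \<and>
     (\<forall>x\<in>H_verts k A. \<forall>y\<in>H_verts k A.
        (x, y) \<in> ({(a, b). a \<in> H_verts k A \<and> b \<in> H_verts k A \<and> H_adj a b})\<^sup>*)"

definition is_polymer :: "nat \<Rightarrow> nat \<Rightarrow> (nat \<Rightarrow> nat set set) \<Rightarrow> bool" where
  "is_polymer d k A \<longleftrightarrow>
     (\<forall>i<k. (A i \<subseteq> Even_V d \<or> A i \<subseteq> Odd_V d)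
            \<and> real (card (closure_cube d (A i))) \<le> 3 / 4 * 2 ^ (d - 1))
     \<and> H_connected k A"

definition is_D_polymer :: "nat \<Rightarrow> nat \<Rightarrow> (nat \<Rightarrow> nat set set) \<Rightarrow> (nat \<Rightarrow> nat set set) \<Rightarrow> bool" where
  "is_D_polymer d k D A \<longleftrightarrow> is_polymer d k A \<and> (\<forall>i<k. A i \<subseteq> D i)"

definition exp_neg :: "ereal \<Rightarrow> real" where
  "exp_neg \<beta> = (if \<beta> = \<infinity> then 0 else exp (- real_of_ereal \<beta>))"

definition poly_weight :: "nat \<Rightarrow> nat \<Rightarrow> real \<Rightarrow> ereal \<Rightarrow> (nat \<Rightarrow> nat set set) \<Rightarrow> real" where
  "poly_weight d k lam \<beta> A =
     (\<Sum>B \<in> PiE {..<k} (\<lambda>i. Pow (nbhd d (A i))).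
        lam ^ (\<Sum>i<k. card (A i) + card (B i)) / (1 + lam) ^ (\<Sum>i<k. card (nbhd d (A i)))
        * exp_neg \<beta> ^ card (\<Union>i<k. edges_between (A i) (B i)))"

definition alpha_k :: "nat \<Rightarrow> real \<Rightarrow> ereal \<Rightarrow> real" where
  "alpha_k k lam \<beta> = (1 + ((1 + lam) ^ k - 1) * exp_neg \<beta>) / (1 + lam) ^ k"

end

theory Submission
  imports Defs "HOL-Analysis.Convex"
begin

text \<open>Write x = e^{-\<beta>} and let W be a random set of edges of Q_d containing each edge
  independently with probability x, so that x^{|E|} is the probability that E \<subseteq> W.
  Summing over the B_i first, the weight sum becomes the expectation of
  \<Prod>_i (1+\<lambda>)^{|G_i(W)|}, where G_i(W) is the set of vertices of N(A_i) all of whose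
  edges to A_i lie in W. By the generalised Hoelder inequality (AM-GM after normalisation) it
  suffices to bound each k-th moment E (1+\<lambda>)^{k|G_i(W)|}; expanding it back gives
  \<Sum>_{C \<subseteq> N(A_i)} ((1+\<lambda>)^k-1)^{|C|} x^{|E(A_i,C)|}, and since |E(A_i,C)| \<ge> |C|
  (every vertex of C has an edge to A_i, and A_i is disjoint from N(A_i) by bipartiteness) this
  is at most (1 + ((1+\<lambda>)^k-1) x)^{|N(A_i)|} = ((1+\<lambda>)^k \<alpha>_k)^{|N(A_i)|}.\<close>

lemma sum_Pow_power_card:
  fixes a :: "'a :: comm_semiring_1"
  assumes "finite N"
  shows "(\<Sum>C\<in>Pow N. a ^ card C) = (1 + a) ^ card N"
  using prod_add[OF assms, of "\<lambda>_. a" "\<lambda>_. 1"] by (simp add: add.commute)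

lemma sum_PiE_Pow_prod_power_card:
  fixes a :: "'a :: comm_semiring_1"
  assumes "finite I" and "\<And>i. i \<in> I \<Longrightarrow> finite (S i)"
  shows "(\<Sum>B\<in>PiE I (\<lambda>i. Pow (S i)). \<Prod>i\<in>I. a ^ card (B i)) = (\<Prod>i\<in>I. (1 + a) ^ card (S i))"
proof -
  have "(\<Sum>B\<in>PiE I (\<lambda>i. Pow (S i)). \<Prod>i\<in>I. a ^ card (B i)) = (\<Prod>i\<in>I. \<Sum>C\<in>Pow (S i). a ^ card C)"
    using assms by (intro prod_sum_PiE[symmetric]) auto
  also have "\<dots> = (\<Prod>i\<in>I. (1 + a) ^ card (S i))"
    using assms by (intro prod.cong refl sum_Pow_power_card) auto
  finally show ?thesis .
qed

lemma power_powr_inverse: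
  fixes p :: real
  assumes "0 \<le> p" and "k \<ge> 1"
  shows "(p ^ k) powr (1 / real k) = p"
  using assms by (cases "p = 0") (simp_all add: powr_realpow[symmetric] powr_powr)

lemma prod_le_mean_power:
  fixes y :: "nat \<Rightarrow> real"
  assumes k: "k \<ge> 1" and y: "\<And>i. i < k \<Longrightarrow> 0 \<le> y i"
  shows "(\<Prod>i<k. y i) \<le> (\<Sum>i<k. y i ^ k) / k"
proof -
  have "((\<Prod>i<k. y i) ^ k) powr (1 / real k) \<le> (\<Sum>i<k. y i ^ k / k)"
    using arith_geom_mean[of "{..<k}" "\<lambda>i. y i ^ k"] k y
    by (simp add: prod_power_distrib lessThan_empty_iff)
  moreover have "((\<Prod>i<k. y i) ^ k) powr (1 / real k) = (\<Prod>i<k. y i)"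
    using k y by (intro power_powr_inverse prod_nonneg) auto
  ultimately show ?thesis by (simp add: sum_divide_distrib)
qed

text \<open>A discrete generalised Hoelder inequality: applying AM-GM to the G_i W / c_i
  turns the product into a sum of k-th moments.\<close>

lemma sum_mult_prod_le_prod_of_moment_bounds:
  fixes w :: "'w \<Rightarrow> real" and G :: "nat \<Rightarrow> 'w \<Rightarrow> real" and c :: "nat \<Rightarrow> real"
  assumes k: "k \<ge> 1"
    and w: "\<And>W. W \<in> S \<Longrightarrow> 0 \<le> w W"
    and G: "\<And>i W. i < k \<Longrightarrow> W \<in> S \<Longrightarrow> 0 \<le> G i W"
    and c: "\<And>i. i < k \<Longrightarrow> 0 < c i"
    and moment: "\<And>i. i < k \<Longrightarrow> (\<Sum>W\<in>S. w W * G i W ^ k) \<le> c i ^ k"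
  shows "(\<Sum>W\<in>S. w W * (\<Prod>i<k. G i W)) \<le> (\<Prod>i<k. c i)"
proof -
  define P where "P = (\<Prod>i<k. c i)"
  have P: "0 < P" unfolding P_def using c by (intro prod_pos) auto
  have pointwise: "(\<Prod>i<k. G i W) \<le> P / k * (\<Sum>i<k. G i W ^ k / c i ^ k)" if "W \<in> S" for W
  proof -
    have "(\<Prod>i<k. G i W) = P * (\<Prod>i<k. G i W / c i)"
      using c by (simp add: P_def prod_dividef less_imp_neq[symmetric])
    also have "\<dots> \<le> P * ((\<Sum>i<k. (G i W / c i) ^ k) / k)"
      using k G c that P by (intro mult_left_mono prod_le_mean_power) (auto intro: divide_nonneg_pos)
    finally show ?thesis by (simp add: power_divide)
  qed
  have "(\<Sum>W\<in>S. w W * (\<Prod>i<k. G i W)) \<le> (\<Sum>W\<in>S. w W * (P / k * (\<Sum>i<k. G i W ^ k / c i ^ k)))"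
    using w pointwise by (intro sum_mono mult_left_mono) auto
  also have "\<dots> = P / k * (\<Sum>i<k. (\<Sum>W\<in>S. w W * G i W ^ k) / c i ^ k)"
    by (simp add: sum_distrib_left sum_divide_distrib sum.swap[of _ S] algebra_simps)
  also have "\<dots> \<le> P / k * (\<Sum>i<k. 1)"
    using moment c P by (intro mult_left_mono sum_mono) auto
  also have "\<dots> = P" using k by simp
  finally show ?thesis unfolding P_def .
qed

definition bernoulli_weight :: "real \<Rightarrow> 'e set \<Rightarrow> 'e set \<Rightarrow> real" where
  "bernoulli_weight x Ed W = x ^ card W * (1 - x) ^ card (Ed - W)"

lemma bernoulli_weight_nonneg: "0 \<le> x \<Longrightarrow> x \<le> 1 \<Longrightarrow> 0 \<le> bernoulli_weight x Ed W"
  by (simp add: bernoulli_weight_def)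

lemma sum_bernoulli_weight_superset:
  fixes x :: real
  assumes fin: "finite Ed" and S: "S \<subseteq> Ed"
  shows "(\<Sum>W\<in>Pow Ed. if S \<subseteq> W then bernoulli_weight x Ed W else 0) = x ^ card S"
proof -
  have "(\<Sum>W\<in>Pow Ed. if S \<subseteq> W then bernoulli_weight x Ed W else 0)
      = (\<Sum>W\<in>Pow Ed. (\<Prod>e\<in>W. x) * (\<Prod>e\<in>Ed - W. if e \<in> S then 0 else 1 - x))"
  proof (rule sum.cong[OF refl])
    fix W assume "W \<in> Pow Ed"
    show "(if S \<subseteq> W then bernoulli_weight x Ed W else 0)
        = (\<Prod>e\<in>W. x) * (\<Prod>e\<in>Ed - W. if e \<in> S then 0 else 1 - x)"
    proof (cases "S \<subseteq> W")
      case True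
      then have "(\<Prod>e\<in>Ed - W. if e \<in> S then 0 else 1 - x) = (\<Prod>e\<in>Ed - W. 1 - x)"
        by (intro prod.cong) auto
      with True show ?thesis by (simp add: bernoulli_weight_def)
    next
      case False
      then obtain e where "e \<in> S" "e \<notin> W" by auto
      with S fin have "(\<Prod>e\<in>Ed - W. if e \<in> S then 0 else 1 - x) = 0"
        by (intro prod_zero) auto
      with False show ?thesis by simp
    qed
  qed
  also have "\<dots> = (\<Prod>e\<in>Ed. x + (if e \<in> S then 0 else 1 - x))"
    by (rule prod_add[OF fin, symmetric])
  also have "\<dots> = (\<Prod>e\<in>Ed. if e \<in> S then x else 1)"
    by (intro prod.cong) auto
  also have "\<dots> = x ^ card S"
    using fin S by (simp add: prod.If_cases Int_absorb1 Int_absorb2 Collect_mem_eq)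
  finally show ?thesis .
qed

definition covered :: "('v \<Rightarrow> 'e set) \<Rightarrow> 'v set \<Rightarrow> 'e set \<Rightarrow> 'v set" where
  "covered F N W = {v \<in> N. F v \<subseteq> W}"

lemma Pow_covered: "Pow (covered F N W) = {C \<in> Pow N. \<Union>(F ` C) \<subseteq> W}"
  by (auto simp: covered_def)

lemma sum_bernoulli_power_card_covered_le:
  fixes F :: "'v \<Rightarrow> 'e set" and x a :: real
  assumes Ed: "finite Ed" and N: "finite N" and F: "\<And>v. v \<in> N \<Longrightarrow> F v \<subseteq> Ed"
    and x: "0 \<le> x" "x \<le> 1" and a: "0 \<le> a"
    and expanding: "\<And>C. C \<subseteq> N \<Longrightarrow> card C \<le> card (\<Union>(F ` C))"
  shows "(\<Sum>W\<in>Pow Ed. bernoulli_weight x Ed W * (1 + a) ^ card (covered F N W))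
         \<le> (1 + a * x) ^ card N"
proof -
  let ?\<mu> = "bernoulli_weight x Ed"
  have "(\<Sum>W\<in>Pow Ed. ?\<mu> W * (1 + a) ^ card (covered F N W))
      = (\<Sum>W\<in>Pow Ed. \<Sum>C\<in>Pow N. if \<Union>(F ` C) \<subseteq> W then a ^ card C * ?\<mu> W else 0)"
  proof (rule sum.cong[OF refl])
    fix W
    have "finite (covered F N W)" using N by (simp add: covered_def)
    then have "(1 + a) ^ card (covered F N W) = (\<Sum>C\<in>{C \<in> Pow N. \<Union>(F ` C) \<subseteq> W}. a ^ card C)"
      unfolding Pow_covered[symmetric] by (rule sum_Pow_power_card[symmetric])
    also have "\<dots> = (\<Sum>C\<in>Pow N. if \<Union>(F ` C) \<subseteq> W then a ^ card C else 0)"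
      using N by (intro sum.inter_filter) simp
    finally show "?\<mu> W * (1 + a) ^ card (covered F N W)
        = (\<Sum>C\<in>Pow N. if \<Union>(F ` C) \<subseteq> W then a ^ card C * ?\<mu> W else 0)"
      by (simp add: sum_distrib_left if_distrib mult.commute cong: if_cong)
  qed
  also have "\<dots> = (\<Sum>C\<in>Pow N. a ^ card C * (\<Sum>W\<in>Pow Ed. if \<Union>(F ` C) \<subseteq> W then ?\<mu> W else 0))"
    by (subst sum.swap) (simp add: sum_distrib_left if_distrib cong: if_cong)
  also have "\<dots> = (\<Sum>C\<in>Pow N. a ^ card C * x ^ card (\<Union>(F ` C)))"
  proof (intro sum.cong refl arg_cong[where f = "\<lambda>t. a ^ card _ * t"])
    fix C assume "C \<in> Pow N"
    then have "\<Union>(F ` C) \<subseteq> Ed" using F by auto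
    then show "(\<Sum>W\<in>Pow Ed. if \<Union>(F ` C) \<subseteq> W then ?\<mu> W else 0) = x ^ card (\<Union>(F ` C))"
      using Ed by (rule sum_bernoulli_weight_superset[rotated])
  qed
  also have "\<dots> \<le> (\<Sum>C\<in>Pow N. (a * x) ^ card C)"
  proof (rule sum_mono)
    fix C assume "C \<in> Pow N"
    then have "x ^ card (\<Union>(F ` C)) \<le> x ^ card C"
      using expanding x by (intro power_decreasing) auto
    then show "a ^ card C * x ^ card (\<Union>(F ` C)) \<le> (a * x) ^ card C"
      using a by (simp add: power_mult_distrib mult_left_mono)
  qed
  also have "\<dots> = (1 + a * x) ^ card N"
    using N by (rule sum_Pow_power_card)
  finally show ?thesis .
qed

lemma sum_PiE_eq_sum_bernoulli_covered:
  fixes F :: "nat \<Rightarrow> 'v \<Rightarrow> 'e set" and lam x :: real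
  assumes Ed: "finite Ed" and N: "\<And>i. i < k \<Longrightarrow> finite (N i)"
    and F: "\<And>i v. i < k \<Longrightarrow> v \<in> N i \<Longrightarrow> F i v \<subseteq> Ed"
  shows "(\<Sum>B\<in>PiE {..<k} (\<lambda>i. Pow (N i)). lam ^ (\<Sum>i<k. card (B i)) * x ^ card (\<Union>i<k. \<Union>(F i ` B i)))
       = (\<Sum>W\<in>Pow Ed. bernoulli_weight x Ed W * (\<Prod>i<k. (1 + lam) ^ card (covered (F i) (N i) W)))"
proof -
  let ?\<mu> = "bernoulli_weight x Ed"
  let ?Pi = "PiE {..<k} (\<lambda>i. Pow (N i))"
  let ?E = "\<lambda>B. \<Union>i<k. \<Union>(F i ` B i)"
  let ?w = "\<lambda>B. lam ^ (\<Sum>i<k. card (B i))"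
  have "(\<Sum>B\<in>?Pi. ?w B * x ^ card (?E B))
      = (\<Sum>B\<in>?Pi. \<Sum>W\<in>Pow Ed. if ?E B \<subseteq> W then ?w B * ?\<mu> W else 0)"
  proof (rule sum.cong[OF refl])
    fix B assume "B \<in> ?Pi"
    then have "?E B \<subseteq> Ed" using F by (fastforce simp: PiE_iff)
    then show "?w B * x ^ card (?E B) = (\<Sum>W\<in>Pow Ed. if ?E B \<subseteq> W then ?w B * ?\<mu> W else 0)"
      using Ed by (simp add: sum_bernoulli_weight_superset[symmetric] sum_distrib_left if_distrib
          cong: if_cong)
  qed
  also have "\<dots> = (\<Sum>W\<in>Pow Ed. \<Sum>B\<in>?Pi. if ?E B \<subseteq> W then ?w B * ?\<mu> W else 0)"
    by (rule sum.swap)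
  also have "\<dots> = (\<Sum>W\<in>Pow Ed. ?\<mu> W * (\<Prod>i<k. (1 + lam) ^ card (covered (F i) (N i) W)))"
  proof (rule sum.cong[OF refl])
    fix W
    have kept_eq_PiE: "{B \<in> ?Pi. ?E B \<subseteq> W} = PiE {..<k} (\<lambda>i. Pow (covered (F i) (N i) W))"
      by (auto simp: PiE_def covered_def UN_subset_iff) blast
    have "(\<Sum>B\<in>?Pi. if ?E B \<subseteq> W then ?w B * ?\<mu> W else 0) = (\<Sum>B\<in>{B \<in> ?Pi. ?E B \<subseteq> W}. ?w B * ?\<mu> W)"
      using N by (intro sum.inter_filter[symmetric] finite_PiE) auto
    also have "\<dots> = ?\<mu> W * (\<Sum>B\<in>PiE {..<k} (\<lambda>i. Pow (covered (F i) (N i) W)). \<Prod>i<k. lam ^ card (B i))"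
      by (simp add: kept_eq_PiE sum_distrib_left power_sum mult.commute)
    also have "\<dots> = ?\<mu> W * (\<Prod>i<k. (1 + lam) ^ card (covered (F i) (N i) W))"
      using N by (subst sum_PiE_Pow_prod_power_card) (auto simp: covered_def)
    finally show "(\<Sum>B\<in>?Pi. if ?E B \<subseteq> W then ?w B * ?\<mu> W else 0)
        = ?\<mu> W * (\<Prod>i<k. (1 + lam) ^ card (covered (F i) (N i) W))" .
  qed
  finally show ?thesis .
qed

lemma sum_PiE_edge_weight_le:
  fixes F :: "nat \<Rightarrow> 'v \<Rightarrow> 'e set" and lam x :: real
  assumes k: "k \<ge> 1" and lam: "0 \<le> lam" and x: "0 \<le> x" "x \<le> 1"
    and N: "\<And>i. i < k \<Longrightarrow> finite (N i)"
    and F: "\<And>i v. i < k \<Longrightarrow> v \<in> N i \<Longrightarrow> finite (F i v)"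
    and expanding: "\<And>i C. i < k \<Longrightarrow> C \<subseteq> N i \<Longrightarrow> card C \<le> card (\<Union>(F i ` C))"
  shows "(\<Sum>B\<in>PiE {..<k} (\<lambda>i. Pow (N i)). lam ^ (\<Sum>i<k. card (B i)) * x ^ card (\<Union>i<k. \<Union>(F i ` B i)))
         \<le> ((1 + ((1 + lam) ^ k - 1) * x) powr (1 / real k)) ^ (\<Sum>i<k. card (N i))"
proof -
  define Ed where "Ed = (\<Union>i<k. \<Union>(F i ` N i))"
  define a where "a = (1 + lam) ^ k - 1"
  define r where "r = (1 + a * x) powr (1 / real k)"
  have Ed: "finite Ed" using N F by (simp add: Ed_def)
  have F_Ed: "F i v \<subseteq> Ed" if "i < k" "v \<in> N i" for i v
    using that by (auto simp: Ed_def)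
  have a: "0 \<le> a" using lam by (simp add: a_def one_le_power)
  have base: "0 < 1 + a * x" using a x by (simp add: add_pos_nonneg)
  then have r: "0 < r" by (simp add: r_def)
  have r_k: "r ^ k = 1 + a * x"
    using base r k by (simp add: r_def powr_realpow[symmetric] powr_powr)
  have "(\<Sum>B\<in>PiE {..<k} (\<lambda>i. Pow (N i)). lam ^ (\<Sum>i<k. card (B i)) * x ^ card (\<Union>i<k. \<Union>(F i ` B i)))
      = (\<Sum>W\<in>Pow Ed. bernoulli_weight x Ed W * (\<Prod>i<k. (1 + lam) ^ card (covered (F i) (N i) W)))"
    using Ed N F_Ed by (rule sum_PiE_eq_sum_bernoulli_covered)
  also have "\<dots> \<le> (\<Prod>i<k. r ^ card (N i))"
  proof (rule sum_mult_prod_le_prod_of_moment_bounds[OF k])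
    fix i assume i: "i < k"
    have "(\<Sum>W\<in>Pow Ed. bernoulli_weight x Ed W * ((1 + lam) ^ card (covered (F i) (N i) W)) ^ k)
        = (\<Sum>W\<in>Pow Ed. bernoulli_weight x Ed W * (1 + a) ^ card (covered (F i) (N i) W))"
      by (simp add: a_def power_mult[symmetric] mult.commute[of k])
    also have "\<dots> \<le> (1 + a * x) ^ card (N i)"
      using Ed N[OF i] F_Ed[OF i] x a expanding[OF i] by (rule sum_bernoulli_power_card_covered_le)
    also have "\<dots> = (r ^ card (N i)) ^ k"
      by (simp add: r_k[symmetric] power_mult[symmetric] mult.commute[of k])
    finally show "(\<Sum>W\<in>Pow Ed. bernoulli_weight x Ed W * ((1 + lam) ^ card (covered (F i) (N i) W)) ^ k)
        \<le> (r ^ card (N i)) ^ k" .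
  qed (use x lam r in \<open>auto intro: bernoulli_weight_nonneg\<close>)
  also have "\<dots> = r ^ (\<Sum>i<k. card (N i))"
    by (simp add: power_sum)
  finally show ?thesis unfolding r_def a_def .
qed

lemma finite_cube_V: "finite (cube_V d)"
  by (simp add: cube_V_def)

lemma finite_of_mem_cube_V: "v \<in> cube_V d \<Longrightarrow> finite v"
  by (auto simp: cube_V_def finite_subset)

lemma finite_nbhd: "finite (nbhd d U)"
  by (rule finite_subset[OF _ finite_cube_V]) (auto simp: nbhd_def)

lemma cube_adj_parity:
  assumes "cube_adj u v" and "finite u" and "finite v"
  shows "even (card u) \<longleftrightarrow> odd (card v)"
proof -
  have "card (u - v) + card (v - u) = card ((u - v) \<union> (v - u))"
    using assms by (intro card_Un_disjoint[symmetric]) auto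
  also have "\<dots> = 1"
    using assms(1) by (simp add: cube_adj_def hdist_def)
  finally have "card (u - v) + card (v - u) = 1" .
  moreover have "card u = card (u \<inter> v) + card (u - v)" "card v = card (v \<inter> u) + card (v - u)"
    using assms by (simp_all add: card_Int_Diff)
  ultimately show ?thesis by (simp add: Int_commute) presburger
qed

lemma parity_class_disjoint_nbhd:
  assumes "A \<subseteq> Even_V d \<or> A \<subseteq> Odd_V d" and "v \<in> nbhd d A"
  shows "v \<notin> A"
proof
  assume "v \<in> A"
  from assms(2) obtain u where u: "u \<in> A" "cube_adj u v" by (auto simp: nbhd_def)
  have "u \<in> cube_V d" "v \<in> cube_V d" "even (card u) \<longleftrightarrow> even (card v)"
    using assms(1) u(1) \<open>v \<in> A\<close> by (auto simp: Even_V_def Odd_V_def)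
  then show False
    using cube_adj_parity[OF u(2)] finite_of_mem_cube_V by blast
qed

lemma edges_between_eq_UN: "edges_between A B = \<Union>((\<lambda>v. edges_between A {v}) ` B)"
  by (auto simp: edges_between_def)

lemma finite_edges_between:
  assumes "finite A" and "finite B"
  shows "finite (edges_between A B)"
proof -
  have "edges_between A B \<subseteq> (\<lambda>(u, v). {u, v}) ` (A \<times> B)"
    by (auto simp: edges_between_def)
  then show ?thesis using assms finite_subset by blast
qed

lemma card_le_card_edges_between:
  assumes A: "A \<subseteq> Even_V d \<or> A \<subseteq> Odd_V d" and C: "C \<subseteq> nbhd d A"
  shows "card C \<le> card (edges_between A C)"
proof (rule surj_card_le)
  have "A \<subseteq> cube_V d" using A by (auto simp: Even_V_def Odd_V_def)
  then have "finite A" using finite_cube_V by (rule finite_subset)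
  moreover have "finite C" using C finite_nbhd by (rule finite_subset)
  ultimately show "finite (edges_between A C)" by (rule finite_edges_between)
  show "C \<subseteq> (\<lambda>e. the_elem (e - A)) ` edges_between A C"
  proof
    fix v assume "v \<in> C"
    then obtain u where u: "u \<in> A" "cube_adj u v" using C by (auto simp: nbhd_def)
    have "v \<notin> A" using parity_class_disjoint_nbhd[OF A] C \<open>v \<in> C\<close> by blast
    with u have "the_elem ({u, v} - A) = v" by (simp add: insert_Diff_if)
    moreover have "{u, v} \<in> edges_between A C"
      using u \<open>v \<in> C\<close> by (auto simp: edges_between_def)
    ultimately show "v \<in> (\<lambda>e. the_elem (e - A)) ` edges_between A C" by force
  qed
qed

lemma exp_neg_bounds:
  assumes "\<beta> \<ge> 0"
  shows "0 \<le> exp_neg \<beta>" and "exp_neg \<beta> \<le> 1"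
  using assms by (auto simp: exp_neg_def real_of_ereal_pos)

lemma poly_weight_eq:
  "poly_weight d k lam \<beta> A
     = lam ^ (\<Sum>i<k. card (A i)) / (1 + lam) ^ (\<Sum>i<k. card (nbhd d (A i)))
       * (\<Sum>B\<in>PiE {..<k} (\<lambda>i. Pow (nbhd d (A i))).
            lam ^ (\<Sum>i<k. card (B i)) * exp_neg \<beta> ^ card (\<Union>i<k. edges_between (A i) (B i)))"
  unfolding poly_weight_def sum_distrib_left
  by (intro sum.cong refl) (simp add: sum.distrib power_add)

lemma alpha_k_powr:
  assumes "k \<ge> 1" and "0 \<le> lam"
  shows "alpha_k k lam \<beta> powr (1 / real k)
         = (1 + ((1 + lam) ^ k - 1) * exp_neg \<beta>) powr (1 / real k) / (1 + lam)"
  using assms by (simp add: alpha_k_def powr_divide power_powr_inverse)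

lemma sum_PiE_cube_edge_weight_le:
  fixes A :: "nat \<Rightarrow> nat set set" and lam x :: real
  assumes k: "k \<ge> 1" and lam: "0 \<le> lam" and x: "0 \<le> x" "x \<le> 1"
    and parity: "\<And>i. i < k \<Longrightarrow> A i \<subseteq> Even_V d \<or> A i \<subseteq> Odd_V d"
  shows "(\<Sum>B\<in>PiE {..<k} (\<lambda>i. Pow (nbhd d (A i))).
            lam ^ (\<Sum>i<k. card (B i)) * x ^ card (\<Union>i<k. edges_between (A i) (B i)))
         \<le> ((1 + ((1 + lam) ^ k - 1) * x) powr (1 / real k)) ^ (\<Sum>i<k. card (nbhd d (A i)))"
proof -
  have finite_A: "finite (A i)" if "i < k" for i
    using parity[OF that] finite_cube_V
    by (auto simp: Even_V_def Odd_V_def intro: finite_subset)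
  have "(\<Sum>B\<in>PiE {..<k} (\<lambda>i. Pow (nbhd d (A i))). lam ^ (\<Sum>i<k. card (B i))
           * x ^ card (\<Union>i<k. \<Union>((\<lambda>v. edges_between (A i) {v}) ` B i)))
        \<le> ((1 + ((1 + lam) ^ k - 1) * x) powr (1 / real k)) ^ (\<Sum>i<k. card (nbhd d (A i)))"
  proof (rule sum_PiE_edge_weight_le[OF k lam x finite_nbhd])
    show "finite (edges_between (A i) {v})" if "i < k" for i v
      using finite_A[OF that] by (simp add: finite_edges_between)
    show "card C \<le> card (\<Union>((\<lambda>v. edges_between (A i) {v}) ` C))"
      if "i < k" "C \<subseteq> nbhd d (A i)" for i C
      using card_le_card_edges_between[OF parity[OF that(1)] that(2)]
      by (simp only: edges_between_eq_UN[symmetric])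
  qed
  then show ?thesis by (simp only: edges_between_eq_UN[symmetric])
qed

theorem lemma4p5:
  fixes d k :: nat and lam :: real and \<beta> :: ereal
    and D A :: "nat \<Rightarrow> nat set set"
  assumes "k \<ge> 1" and "lam > 0" and "\<beta> \<ge> 0"
    and "\<forall>i<k. D i = Even_V d \<or> D i = Odd_V d"
    and "is_D_polymer d k D A"
  shows "poly_weight d k lam \<beta> A
           \<le> lam ^ (\<Sum>i<k. card (A i))
             * (alpha_k k lam \<beta> powr (1 / real k)) ^ (\<Sum>i<k. card (nbhd d (A i)))"
proof -
  let ?n = "\<Sum>i<k. card (nbhd d (A i))"
  let ?r = "(1 + ((1 + lam) ^ k - 1) * exp_neg \<beta>) powr (1 / real k)"
  have "A i \<subseteq> Even_V d \<or> A i \<subseteq> Odd_V d" if "i < k" for i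
    using assms(5) that by (auto simp: is_D_polymer_def is_polymer_def)
  then have "(\<Sum>B\<in>PiE {..<k} (\<lambda>i. Pow (nbhd d (A i))).
           lam ^ (\<Sum>i<k. card (B i)) * exp_neg \<beta> ^ card (\<Union>i<k. edges_between (A i) (B i)))
        \<le> ?r ^ ?n"
    using assms(1,2) exp_neg_bounds[OF assms(3)] by (intro sum_PiE_cube_edge_weight_le) auto
  then have "poly_weight d k lam \<beta> A \<le> lam ^ (\<Sum>i<k. card (A i)) / (1 + lam) ^ ?n * ?r ^ ?n"
    unfolding poly_weight_eq using assms(2) by (intro mult_left_mono) simp_all
  also have "\<dots> = lam ^ (\<Sum>i<k. card (A i)) * (alpha_k k lam \<beta> powr (1 / real k)) ^ ?n"
    using assms(1,2) by (simp add: alpha_k_powr power_divide)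
  finally show ?thesis .
qed

end
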